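(* Let $T,L,n\in\mathbb{N}$. Consider discrete-time LIF-SNNs with latency $T$, $L$ hidden layers, input dimension $n$ and width $n$ in every hidden layer. Then there exists a choice of the parameters $\big(W^\ell,b^\ell,u^\ell(0),\beta^\ell,\vartheta^\ell\big)_{\ell\in[L]}$ such that for every initial spike sequence $s^0=(s^0(t))_{t\in[T]}\in\{0,1\}^{n\times T}$ the spike sequence of the last hidden layer satisfies $(s^L(t))_{t\in[T]}=s^0$.
   Context: A discrete-time LIF-SNN with $L$ hidden layers of widths $n_1,\dots,n_L$, input dimension $n_0$ and latency $T\in\mathbb{N}$ has parameters: weight matrices $W^\ell\in\mathbb{R}^{n_\ell\times n_{\ell-1}}$, bias vectors $b^\ell\in\mathbb{R}^{n_\ell}$, initial membrane potentials $u^\ell(0)\in\mathbb{R}^{n_\ell}$, leak parameters $\beta^\ell\in[0,1]$ and thresholds $\vartheta^\ell\in(0,\infty)$, $\ell\in[L]$. Given initial spike activations $(s^0(t))_{t\in[T]}$ with $s^0(t)\in\mathbb{R}^{n_0}$, the spike vectors $s^\ell(t)\in\{0,1\}^{n_\ell}$ and membrane potentials $u^\ell(t)\in\mathbb{R}^{n_\ell}$ are defined recursively for $\ell\in[L]$, $t\in[T]$ by $s^\ell(t)=H\big(\beta^\ell u^\ell(t-1)+W^\ell s^{\ell-1}(t)+b^\ell-\vartheta^\ell\mathbf{1}_{n_\ell}\big)$ and $u^\ell(t)=\beta^\ell u^\ell(t-1)+W^\ell s^{\ell-1}(t)+b^\ell-\vartheta^\ell s^\ell(t)$, where $H$ is the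 Heaviside function applied entrywise ($H(z)=1$ if $z\ge 0$, $H(z)=0$ otherwise) and $\mathbf{1}_{n_\ell}$ is the all-ones vector. *)

theory Defs
  imports "HOL-Analysis.Analysis"
begin

definition heaviside :: "real \<Rightarrow> real" where
  "heaviside z = (if z \<ge> 0 then 1 else 0)"

text \<open>One LIF layer with m inputs and k neurons. Vectors are functions nat \<Rightarrow> real,
  only indices below the dimension are meaningful (others are set to 0).
  Given input spikes x t (t = 1..T), returns the pair (s(t), u(t)) for t \<ge> 0,
  where at t = 0 the spike component is a dummy 0 and the potential is u(0).\<close>
fun lif_layer :: "nat \<Rightarrow> nat \<Rightarrow> (nat \<Rightarrow> nat \<Rightarrow> real) \<Rightarrow> (nat \<Rightarrow> real) \<Rightarrow> (nat \<Rightarrow> real)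
    \<Rightarrow> real \<Rightarrow> real \<Rightarrow> (nat \<Rightarrow> nat \<Rightarrow> real) \<Rightarrow> nat \<Rightarrow> (nat \<Rightarrow> real) \<times> (nat \<Rightarrow> real)" where
  "lif_layer m k W b u0 beta theta x 0 = ((\<lambda>i. 0), (\<lambda>i. if i < k then u0 i else 0))"
| "lif_layer m k W b u0 beta theta x (Suc t) =
     (let uprev = snd (lif_layer m k W b u0 beta theta x t);
          pre = (\<lambda>i. beta * uprev i + (\<Sum>j<m. W i j * x (Suc t) j) + b i);
          s = (\<lambda>i. if i < k then heaviside (pre i - theta) else 0)
      in (s, (\<lambda>i. if i < k then pre i - theta * s i else 0)))"

text \<open>Spike output sequence of hidden layer l (l = 0 gives the input s^0),
  for an SNN with input dimension n and all hidden widths n.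
  Parameters of layer l (l = 1..L): W l, b l, u0 l, beta l, theta l.\<close>
fun snn_spikes :: "nat \<Rightarrow> (nat \<Rightarrow> nat \<Rightarrow> nat \<Rightarrow> real) \<Rightarrow> (nat \<Rightarrow> nat \<Rightarrow> real) \<Rightarrow> (nat \<Rightarrow> nat \<Rightarrow> real)
    \<Rightarrow> (nat \<Rightarrow> real) \<Rightarrow> (nat \<Rightarrow> real) \<Rightarrow> (nat \<Rightarrow> nat \<Rightarrow> real) \<Rightarrow> nat \<Rightarrow> nat \<Rightarrow> nat \<Rightarrow> real" where
  "snn_spikes n W b u0 beta theta s0 0 = s0"
| "snn_spikes n W b u0 beta theta s0 (Suc l) =
     (\<lambda>t. fst (lif_layer n n (W (Suc l)) (b (Suc l)) (u0 (Suc l)) (beta (Suc l)) (theta (Suc l))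
              (snn_spikes n W b u0 beta theta s0 l) t))"

end

theory Submission
  imports Defs
begin

text \<open>With leak \<open>\<beta> = 0\<close> a neuron forgets its membrane potential, so at every time step it
  fires iff its current input reaches the threshold. With identity weights, zero bias and
  a threshold in \<open>(0, 1]\<close>, neuron \<open>i\<close> therefore fires iff input neuron \<open>i\<close> spiked, and a
  stack of such layers passes every binary spike train through unchanged.\<close>

definition identity_weights :: "nat \<Rightarrow> nat \<Rightarrow> real" where
  "identity_weights i j = (if i = j then 1 else 0)"

lemma sum_identity_weights:
  assumes "i < m"
  shows "(\<Sum>j<m. identity_weights i j * x j) = x i"
proof -
  have "(\<Sum>j<m. identity_weights i j * x j) = (\<Sum>j<m. if i = j then x j else 0)"
    by (rule sum.cong) (auto simp: identity_weights_def)
  also have "\<dots> = x i"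
    using assms by simp
  finally show ?thesis .
qed

lemma heaviside_diff_binary:
  assumes "s \<in> {0, 1}" and "0 < \<theta>" and "\<theta> \<le> 1"
  shows "heaviside (s - \<theta>) = s"
  using assms by (auto simp: heaviside_def)

lemma lif_layer_identity_weights:
  assumes "i < k" and "k \<le> m" and "x (Suc t) i \<in> {0, 1}" and "0 < \<theta>" and "\<theta> \<le> 1"
  shows "fst (lif_layer m k identity_weights (\<lambda>_. 0) u0 0 \<theta> x (Suc t)) i = x (Suc t) i"
proof -
  have "(\<Sum>j<m. identity_weights i j * x (Suc t) j) = x (Suc t) i"
    using assms(1,2) by (intro sum_identity_weights) simp
  then show ?thesis
    using assms(1) heaviside_diff_binary[OF assms(3-5)] by (simp add: Let_def)
qed

lemma snn_spikes_identity_weights: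
  assumes binary: "\<forall>j<n. s0 (Suc t) j \<in> {0, 1}"
    and threshold: "\<And>l. 0 < theta l \<and> theta l \<le> 1"
    and "i < n"
  shows "snn_spikes n (\<lambda>_. identity_weights) (\<lambda>_ _. 0) u0 (\<lambda>_. 0) theta s0 l (Suc t) i
         = s0 (Suc t) i"
  using \<open>i < n\<close>
proof (induction l arbitrary: i)
  case 0
  then show ?case by simp
next
  case (Suc l)
  have "snn_spikes n (\<lambda>_. identity_weights) (\<lambda>_ _. 0) u0 (\<lambda>_. 0) theta s0 l (Suc t) i \<in> {0, 1}"
    using Suc binary by simp
  then show ?case
    using Suc lif_layer_identity_weights threshold by simp
qed

theorem proposition3p1:
  fixes T L n :: nat
  shows "\<exists>(W :: nat \<Rightarrow> nat \<Rightarrow> nat \<Rightarrow> real) (b :: nat \<Rightarrow> nat \<Rightarrow> real) (u0 :: nat \<Rightarrow> nat \<Rightarrow> real)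
            (beta :: nat \<Rightarrow> real) (theta :: nat \<Rightarrow> real).
           (\<forall>l\<in>{1..L}. 0 \<le> beta l \<and> beta l \<le> 1 \<and> 0 < theta l) \<and>
           (\<forall>s0 :: nat \<Rightarrow> nat \<Rightarrow> real.
              (\<forall>t\<in>{1..T}. \<forall>i<n. s0 t i \<in> {0, 1}) \<longrightarrow>
              (\<forall>t\<in>{1..T}. \<forall>i<n. snn_spikes n W b u0 beta theta s0 L t i = s0 t i))"
proof (intro exI conjI allI impI ballI)
  fix s0 :: "nat \<Rightarrow> nat \<Rightarrow> real" and t i
  assume binary: "\<forall>t\<in>{1..T}. \<forall>i<n. s0 t i \<in> {0, 1}" and t: "t \<in> {1..T}" and "i < n"
  then obtain t' where t': "t = Suc t'"
    using not0_implies_Suc by fastforce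
  with binary t have "\<forall>j<n. s0 (Suc t') j \<in> {0, 1}"
    by blast
  with t' \<open>i < n\<close>
  show "snn_spikes n (\<lambda>_. identity_weights) (\<lambda>_ _. 0) (\<lambda>_ _. 0) (\<lambda>_. 0) (\<lambda>_. 1) s0 L t i = s0 t i"
    using snn_spikes_identity_weights by simp
qed auto

end
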